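(* Let $\Sigma'\subseteq\Sigma$ be alphabets with $\Pi=\Sigma\setminus\Sigma'$ finite, and let $R\subseteq\Sigma^*\times\Sigma^*$ be finite. If $D\subseteq R$ is a family of $\Sigma$-defining relations for $\Pi$ whose derived generator graph $\Gamma_D(D)$ is acyclic, then there exist a set $Q\subseteq(\Sigma')^*\times(\Sigma')^*$ with $|Q|\le|R\setminus D|$ and a sequence of Tietze transformations between $\langle\Sigma\mid R\rangle$ and $\langle\Sigma'\mid Q\rangle$ whose length lies between $n+k$ and $2n+k$, where $n=|R|-|R\cap((\Sigma')^*\times(\Sigma')^* )|-|D|$ and $k=|\Pi|$.
   Context: For an alphabet $\Sigma$, $\Sigma^*$ is the free monoid of words over $\Sigma$. For $R\subseteq\Sigma^*\times\Sigma^*$ (elements written $q\approx r$), $\langle\Sigma\mid R\rangle$ is the quotient of $\Sigma^*$ by the smallest congruence containing $R$, and $u\sim_Rv$ means $u$ rewrites to $v$ by finitely many steps replacing a subword $q$ by $r$ or $r$ by $q$ with $(q,r)\in R$. The Tietze transformations on presentations are: $\mathbf{Gen}(+)$: from $\langle\Sigma\mid R\rangle$ to $\langle\Sigma\cup\{x\}\mid R\cup\{x\approx w\}\rangle$ with $x\notin\Sigma$, $w\in\Sigma^*$; $\mathbf{Gen}(-)$: if $x\approx w$ is in $R$ and $Q=R\setminus\{x\approx w\}\subseteq\Pi^*\times\Pi^*$ where $\Pi=\Sigma\setminus\{x\}$, from $\langle\Sigma\mid R\rangle$ to $\langle\Pi\mid Q\rangle$; $\mathbf{Rel}(+)$: if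 $q\sim_Rr$, from $\langle\Sigma\mid R\rangle$ to $\langle\Sigma\mid R\cup\{q\approx r\}\rangle$; $\mathbf{Rel}(-)$: if $q\approx r$ is in $R$ and $q\sim_Qr$ with $Q=R\setminus\{q\approx r\}$, from $\langle\Sigma\mid R\rangle$ to $\langle\Sigma\mid Q\rangle$. A sequence of Tietze transformations of length $m$ between two presentations is a chain of $m+1$ presentations from the first to the second in which each consecutive pair is related by a single Tietze transformation (applied in either direction). A $\Sigma$-defining relation for $x\in\Sigma$ is a relation $x\approx w$ with $w\in\Sigma^*$; a family of $\Sigma$-defining relations for $\Pi\subseteq\Sigma$ is a set $\{r_x\mid x\in\Pi\}$ with each $r_x$ a $\Sigma$-defining relation for $x$. Its derived generator graph $\Gamma_D(D)$ has vertex set $\Pi$ and an edge $(x,y)$ whenever $y$ occurs in the right-hand side of $r_x$. A directed graph is acyclic if it has no directed path of positive length from a vertex to itself. *)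

theory Defs
  imports Main
begin

text \<open>Words over an alphabet are lists; \<Sigma>* is lists \<Sigma>.
  A relation q \<approx> r is the pair (q, r). A presentation is a pair (alphabet, relations).\<close>

type_synonym 'a rels = "('a list \<times> 'a list) set"
type_synonym 'a pres = "'a set \<times> 'a rels"

definition wf_pres :: "'a set \<Rightarrow> 'a rels \<Rightarrow> bool" where
  "wf_pres S R \<longleftrightarrow> R \<subseteq> lists S \<times> lists S"

definition rstep :: "'a rels \<Rightarrow> 'a list \<Rightarrow> 'a list \<Rightarrow> bool" where
  "rstep R u v \<longleftrightarrow> (\<exists>x y q r. ((q, r) \<in> R \<or> (r, q) \<in> R) \<and> u = x @ q @ y \<and> v = x @ r @ y)"

definition rsim :: "'a rels \<Rightarrow> 'a list \<Rightarrow> 'a list \<Rightarrow> bool" where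
  "rsim R = (rstep R)\<^sup>*\<^sup>*"

definition tietze :: "'a pres \<Rightarrow> 'a pres \<Rightarrow> bool" where
  "tietze P P' \<longleftrightarrow> (case P of (S, R) \<Rightarrow> case P' of (S', R') \<Rightarrow>
     wf_pres S R \<and>
     ( \<comment> \<open>Gen(+)\<close>
       (\<exists>x w. x \<notin> S \<and> w \<in> lists S \<and> S' = insert x S \<and> R' = insert ([x], w) R)
     \<or> \<comment> \<open>Gen(-)\<close>
       (\<exists>x w. ([x], w) \<in> R \<and> S' = S - {x} \<and> w \<in> lists S'
              \<and> R' = R - {([x], w)} \<and> R' \<subseteq> lists S' \<times> lists S')
     \<or> \<comment> \<open>Rel(+)\<close>
       (\<exists>q r. q \<in> lists S \<and> r \<in> lists S \<and> rsim R q r \<and> S' = S \<and> R' = insert (q, r) R)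
     \<or> \<comment> \<open>Rel(-)\<close>
       (\<exists>q r. (q, r) \<in> R \<and> S' = S \<and> R' = R - {(q, r)} \<and> rsim R' q r)))"

definition tietze_seq :: "nat \<Rightarrow> 'a pres \<Rightarrow> 'a pres \<Rightarrow> bool" where
  "tietze_seq m P1 P2 \<longleftrightarrow> (\<exists>ps. length ps = m + 1 \<and> hd ps = P1 \<and> last ps = P2 \<and>
      (\<forall>i < m. tietze (ps ! i) (ps ! Suc i) \<or> tietze (ps ! Suc i) (ps ! i)))"

definition defining_family :: "'a set \<Rightarrow> 'a set \<Rightarrow> 'a rels \<Rightarrow> bool" where
  "defining_family S P D \<longleftrightarrow> (\<exists>w. (\<forall>x\<in>P. w x \<in> lists S) \<and> D = (\<lambda>x. ([x], w x)) ` P)"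

definition derived_graph :: "'a set \<Rightarrow> 'a rels \<Rightarrow> ('a \<times> 'a) set" where
  "derived_graph P D = {(x, y). x \<in> P \<and> y \<in> P \<and> (\<exists>w. ([x], w) \<in> D \<and> y \<in> set w)}"

end

(* Since the derived generator graph is acyclic, unfolding the defining relations terminates:
   every word over \<Sigma> is D-equivalent to a word over \<Sigma>'.  Each of the n relations that is
   neither in D nor over \<Sigma>' is then exchanged, by one Rel(+) and one Rel(-), for its image
   under this rewriting.  Afterwards the k generators of \<Pi> are deleted by Gen(-), each time
   choosing a source of the acyclic graph, which occurs in no remaining defining relation.
   This takes exactly 2n + k transformations. *)

theory Submission
  imports Defs
begin

lemma rsim_refl: "rsim R u u"
  by (simp add: rsim_def)

lemma rsim_trans: "rsim R u v \<Longrightarrow> rsim R v z \<Longrightarrow> rsim R u z"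
  unfolding rsim_def by (rule rtranclp_trans)

lemma rsim_sym: "rsim R u v \<Longrightarrow> rsim R v u"
proof -
  have "symp (rstep R)"
    unfolding rstep_def by (rule sympI) blast
  then show "rsim R u v \<Longrightarrow> rsim R v u"
    unfolding rsim_def by (metis symp_rtranclp sympD)
qed

lemma rsim_if_mem: "(q, r) \<in> R \<Longrightarrow> rsim R q r"
  unfolding rsim_def rstep_def by (rule r_into_rtranclp) (metis append_Nil append_Nil2)

lemma rsim_mono: "R \<subseteq> R' \<Longrightarrow> rsim R u v \<Longrightarrow> rsim R' u v"
proof -
  assume "R \<subseteq> R'"
  then have "rstep R \<le> rstep R'"
    unfolding rstep_def by blast
  then show "rsim R u v \<Longrightarrow> rsim R' u v"
    unfolding rsim_def by (metis rtranclp_mono predicate2D)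
qed

lemma rstep_context: "rstep R u v \<Longrightarrow> rstep R (a @ u @ b) (a @ v @ b)"
  unfolding rstep_def by (metis append.assoc)

lemma rsim_context: "rsim R u v \<Longrightarrow> rsim R (a @ u @ b) (a @ v @ b)"
  unfolding rsim_def
  by (induction rule: rtranclp_induct) (auto intro: rtranclp.rtrancl_into_rtrancl rstep_context)

lemma rsim_append: "rsim R u u' \<Longrightarrow> rsim R v v' \<Longrightarrow> rsim R (u @ v) (u' @ v')"
  using rsim_context[of R u u' "[]" v] rsim_context[of R v v' u' "[]"] rsim_trans by fastforce

lemma rsim_word_from_letters:
  assumes "\<forall>c\<in>set u. \<exists>v\<in>lists S. rsim R [c] v"
  shows "\<exists>v\<in>lists S. rsim R u v"
  using assms
proof (induction u)
  case Nil
  then show ?case using rsim_refl by fastforce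
next
  case (Cons c u)
  then obtain v1 v2 where "v1 \<in> lists S" "rsim R [c] v1" "v2 \<in> lists S" "rsim R u v2"
    by auto
  then show ?case using rsim_append[of R "[c]" v1 u v2] by (intro bexI[of _ "v1 @ v2"]) auto
qed

lemma tietze_seq_if_relpowp: "(tietze ^^ m) P P' \<Longrightarrow> tietze_seq m P P'"
proof -
  assume "(tietze ^^ m) P P'"
  then obtain f where f: "f 0 = P" "f m = P'" "\<forall>i<m. tietze (f i) (f (Suc i))"
    by (auto simp: relpowp_fun_conv)
  show ?thesis
    unfolding tietze_seq_def
    by (intro exI[of _ "map f [0..<Suc m]"]) (simp add: f hd_map last_map del: upt_Suc)
qed

lemma tietze_rel_plus:
  "wf_pres S R \<Longrightarrow> q \<in> lists S \<Longrightarrow> r \<in> lists S \<Longrightarrow> rsim R q r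
    \<Longrightarrow> tietze (S, R) (S, insert (q, r) R)"
  unfolding tietze_def prod.case by (intro conjI, assumption, rule disjI2, rule disjI2, rule disjI1) blast

lemma tietze_rel_minus:
  "wf_pres S R \<Longrightarrow> (q, r) \<in> R \<Longrightarrow> rsim (R - {(q, r)}) q r
    \<Longrightarrow> tietze (S, R) (S, R - {(q, r)})"
  unfolding tietze_def prod.case by (intro conjI, assumption, rule disjI2, rule disjI2, rule disjI2) blast

lemma tietze_gen_minus:
  "wf_pres S R \<Longrightarrow> ([x], w) \<in> R \<Longrightarrow> R - {([x], w)} \<subseteq> lists (S - {x}) \<times> lists (S - {x})
    \<Longrightarrow> w \<in> lists (S - {x}) \<Longrightarrow> tietze (S, R) (S - {x}, R - {([x], w)})"
  unfolding tietze_def prod.case by (intro conjI, assumption, rule disjI2, rule disjI1) blast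

abbreviation defining_rels :: "('a \<Rightarrow> 'a list) \<Rightarrow> 'a set \<Rightarrow> 'a rels" where
  "defining_rels w T \<equiv> (\<lambda>x. ([x], w x)) ` T"

lemma derived_graph_defining_rels:
  "derived_graph T (defining_rels w T) = {(x, y). x \<in> T \<and> y \<in> T \<and> y \<in> set (w x)}"
  unfolding derived_graph_def by auto

lemma finite_derived_graph: "finite T \<Longrightarrow> finite (derived_graph T D)"
  by (rule finite_subset[of _ "T \<times> T"]) (auto simp: derived_graph_def)

lemma rsim_defining_rels_letter:
  assumes "finite T" "acyclic (derived_graph T (defining_rels w T))"
    and "\<forall>x\<in>T. w x \<in> lists (S \<union> T)" "x \<in> S \<union> T"
  shows "\<exists>v\<in>lists S. rsim (defining_rels w T) [x] v"
proof -
  let ?G = "derived_graph T (defining_rels w T)"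
  have "wf (?G\<inverse>)"
    using finite_derived_graph[OF assms(1)] assms(2) by (rule finite_acyclic_wf_converse)
  then show ?thesis
    using assms(4)
  proof (induction x rule: wf_induct_rule)
    case (less x)
    show ?case
    proof (cases "x \<in> T")
      case False
      then show ?thesis using less.prems rsim_refl by fastforce
    next
      case True
      have "\<exists>v\<in>lists S. rsim (defining_rels w T) (w x) v"
      proof (rule rsim_word_from_letters, intro ballI)
        fix c assume "c \<in> set (w x)"
        then have "c \<in> S \<union> T" and "c \<in> T \<Longrightarrow> (c, x) \<in> ?G\<inverse>"
          using assms(3) True by (auto simp: derived_graph_defining_rels)
        then show "\<exists>v\<in>lists S. rsim (defining_rels w T) [c] v"
          using less.IH rsim_refl by (cases "c \<in> T") fastforce+
      qed
      moreover have "rsim (defining_rels w T) [x] (w x)"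
        using True by (auto intro: rsim_if_mem)
      ultimately show ?thesis using rsim_trans by blast
    qed
  qed
qed

lemma rsim_defining_rels_word:
  assumes "finite T" "acyclic (derived_graph T (defining_rels w T))"
    and "\<forall>x\<in>T. w x \<in> lists (S \<union> T)" "u \<in> lists (S \<union> T)"
  shows "\<exists>v\<in>lists S. rsim (defining_rels w T) u v"
  using assms by (intro rsim_word_from_letters) (auto intro: rsim_defining_rels_letter)

text \<open>Rel(+) adds (q', r'), derivable as q' \<sim> q \<sim> r \<sim> r'; then Rel(-) drops (q, r), derivable
  as q \<sim> q' \<sim> r' \<sim> r.\<close>

lemma tietze_replace_rel:
  assumes "wf_pres S C" "(q, r) \<in> C" "q' \<in> lists S" "r' \<in> lists S" "(q', r') \<noteq> (q, r)"
    and "rsim (C - {(q, r)}) q q'" "rsim (C - {(q, r)}) r r'"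
  shows "(tietze ^^ 2) (S, C) (S, insert (q', r') (C - {(q, r)}))"
proof -
  let ?C' = "insert (q', r') C"
  have "rsim C q' q" "rsim C q r" "rsim C r r'"
    using assms(2,6,7) rsim_mono[of "C - {(q, r)}" C] by (auto intro: rsim_sym rsim_if_mem)
  then have "tietze (S, C) (S, ?C')"
    using assms(1,3,4) by (meson rsim_trans tietze_rel_plus)
  moreover have eq: "?C' - {(q, r)} = insert (q', r') (C - {(q, r)})"
    using assms(5) by auto
  have "rsim (?C' - {(q, r)}) q q'" "rsim (?C' - {(q, r)}) q' r'" "rsim (?C' - {(q, r)}) r' r"
    unfolding eq using assms(6,7) rsim_mono[OF subset_insertI]
    by (blast intro: rsim_sym rsim_if_mem)+
  then have "tietze (S, ?C') (S, ?C' - {(q, r)})"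
    using assms(1-4) by (intro tietze_rel_minus) (auto simp: wf_pres_def intro: rsim_trans)
  ultimately show ?thesis
    unfolding eq numeral_2_eq_2 by (auto intro: relpowp_Suc_I2)
qed

lemma tietze_replace_rels:
  assumes "finite N" "A \<inter> N = {}" "F ` N \<inter> N = {}" "wf_pres S (A \<union> N \<union> F ` N)" "D \<subseteq> A"
    and "\<And>q r. (q, r) \<in> N \<Longrightarrow> rsim D q (fst (F (q, r))) \<and> rsim D r (snd (F (q, r)))"
  shows "(tietze ^^ (2 * card N)) (S, A \<union> N) (S, A \<union> F ` N)"
  using assms
proof (induction N arbitrary: A rule: finite_induct)
  case empty
  then show ?case by simp
next
  case (insert p N)
  obtain q r q' r' where p: "p = (q, r)" and Fp: "F p = (q', r')"
    by (cases p, cases "F p") blast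
  have "(tietze ^^ 2) (S, A \<union> insert p N) (S, insert (q', r') (A \<union> insert p N - {(q, r)}))"
  proof (rule tietze_replace_rel)
    show "wf_pres S (A \<union> insert p N)" "(q, r) \<in> A \<union> insert p N"
      using insert.prems(3) p by (auto simp: wf_pres_def)
    show "q' \<in> lists S" "r' \<in> lists S" "(q', r') \<noteq> (q, r)"
      using insert.prems(2,3) p Fp by (auto simp: wf_pres_def)
    have "D \<subseteq> A \<union> insert p N - {(q, r)}"
      using insert.prems(1,4) p by auto
    then show "rsim (A \<union> insert p N - {(q, r)}) q q'" "rsim (A \<union> insert p N - {(q, r)}) r r'"
      using insert.prems(5)[of q r] p Fp by (auto intro: rsim_mono)
  qed
  moreover have "insert (q', r') (A \<union> insert p N - {(q, r)}) = insert (F p) A \<union> N"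
    using insert.hyps(2) insert.prems(1) p Fp by auto
  moreover have "(tietze ^^ (2 * card N)) (S, insert (F p) A \<union> N) (S, insert (F p) A \<union> F ` N)"
    using insert.prems by (intro insert.IH) (auto simp: wf_pres_def)
  ultimately have "(tietze ^^ (2 + 2 * card N)) (S, A \<union> insert p N) (S, insert (F p) A \<union> F ` N)"
    unfolding relpowp_add by auto
  then show ?case
    using insert.hyps by simp
qed

lemma tietze_normalize_rels:
  assumes "wf_pres U R" "S \<subseteq> U" "finite R" "D \<subseteq> R"
    and "\<And>u. u \<in> lists U \<Longrightarrow> f u \<in> lists S \<and> rsim D u (f u)"
  defines "N \<equiv> R - D - lists S \<times> lists S"
  shows "(tietze ^^ (2 * card N)) (U, R) (U, R \<inter> lists S \<times> lists S \<union> D \<union> map_prod f f ` N)"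
proof -
  let ?L = "lists S \<times> lists S"
  have N: "N \<subseteq> lists U \<times> lists U"
    using assms(1) unfolding N_def wf_pres_def by blast
  have fN: "map_prod f f ` N \<subseteq> ?L"
    using N assms(5) by fastforce
  have "(tietze ^^ (2 * card N)) (U, (R \<inter> ?L \<union> D) \<union> N) (U, (R \<inter> ?L \<union> D) \<union> map_prod f f ` N)"
  proof (rule tietze_replace_rels)
    show "finite N"
      using assms(3) unfolding N_def by simp
    show "(R \<inter> ?L \<union> D) \<inter> N = {}" "map_prod f f ` N \<inter> N = {}"
      using fN unfolding N_def by auto
    have "?L \<subseteq> lists U \<times> lists U"
      using lists_mono[OF assms(2)] by blast
    then show "wf_pres U ((R \<inter> ?L \<union> D) \<union> N \<union> map_prod f f ` N)"
      using assms(1,4) fN N unfolding wf_pres_def by (intro Un_least) blast+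
    show "rsim D q (fst (map_prod f f (q, r))) \<and> rsim D r (snd (map_prod f f (q, r)))"
      if "(q, r) \<in> N" for q r
    proof -
      have "q \<in> lists U" "r \<in> lists U"
        using that N by auto
      then show ?thesis
        using assms(5) by simp
    qed
  qed simp
  moreover have "(R \<inter> ?L \<union> D) \<union> N = R"
    using assms(4) unfolding N_def by blast
  ultimately show ?thesis by simp
qed

lemma tietze_remove_generator:
  assumes "Q \<subseteq> lists S \<times> lists S" "S \<inter> T = {}" "\<forall>y\<in>T. w y \<in> lists (S \<union> T)"
    and "x \<in> T" "\<forall>y\<in>T. x \<notin> set (w y)"
  shows "tietze (S \<union> T, Q \<union> defining_rels w T) (S \<union> (T - {x}), Q \<union> defining_rels w (T - {x}))"
proof -
  have "x \<notin> S"
    using assms(2,4) by auto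
  then have "S \<union> T - {x} = S \<union> (T - {x})"
    and "Q \<union> defining_rels w T - {([x], w x)} = Q \<union> defining_rels w (T - {x})"
    using assms(1) by auto
  moreover have "tietze (S \<union> T, Q \<union> defining_rels w T)
      (S \<union> T - {x}, Q \<union> defining_rels w T - {([x], w x)})"
  proof (rule tietze_gen_minus)
    have "Q \<subseteq> lists (S \<union> T) \<times> lists (S \<union> T)"
      using assms(1) lists_mono[of S "S \<union> T"] by blast
    moreover have "defining_rels w T \<subseteq> lists (S \<union> T) \<times> lists (S \<union> T)"
      using assms(3) by auto
    ultimately show "wf_pres (S \<union> T) (Q \<union> defining_rels w T)"
      unfolding wf_pres_def by blast
    show "([x], w x) \<in> Q \<union> defining_rels w T"
      using assms(4) by blast
    have "Q \<subseteq> lists (S \<union> T - {x}) \<times> lists (S \<union> T - {x})"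
      using assms(1) lists_mono[of S "S \<union> T - {x}"] \<open>x \<notin> S\<close> by blast
    moreover have w: "\<forall>y\<in>T. w y \<in> lists (S \<union> T - {x})"
      using assms(3,5) by auto
    ultimately show "Q \<union> defining_rels w T - {([x], w x)} \<subseteq> lists (S \<union> T - {x}) \<times> lists (S \<union> T - {x})"
      by auto
    show "w x \<in> lists (S \<union> T - {x})"
      using w assms(4) by blast
  qed
  ultimately show ?thesis by simp
qed

lemma tietze_remove_generators:
  assumes "finite T" "Q \<subseteq> lists S \<times> lists S" "S \<inter> T = {}" "\<forall>y\<in>T. w y \<in> lists (S \<union> T)"
    and "acyclic (derived_graph T (defining_rels w T))"
  shows "(tietze ^^ card T) (S \<union> T, Q \<union> defining_rels w T) (S, Q)"
  using assms(1,3-5)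
proof (induction T rule: finite_remove_induct)
  case empty
  then show ?case by simp
next
  case (remove T)
  let ?G = "derived_graph T (defining_rels w T)"
  have "wf ?G"
    using finite_derived_graph[OF remove.hyps(1)] remove.prems(3) by (rule finite_acyclic_wf)
  then obtain x where "x \<in> T" and source: "\<And>y. (y, x) \<in> ?G \<Longrightarrow> y \<notin> T"
    using remove.hyps(2) by (rule wfE_min') blast
  \<comment> \<open>a source of the derived graph occurs in no right-hand side, so Gen(-) can delete it\<close>
  have x_unused: "\<forall>y\<in>T. x \<notin> set (w y)"
    using source \<open>x \<in> T\<close> unfolding derived_graph_defining_rels by blast
  have "tietze (S \<union> T, Q \<union> defining_rels w T) (S \<union> (T - {x}), Q \<union> defining_rels w (T - {x}))"
    using assms(2) remove.prems(1,2) \<open>x \<in> T\<close> x_unused by (rule tietze_remove_generator)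
  moreover have "(tietze ^^ card (T - {x})) (S \<union> (T - {x}), Q \<union> defining_rels w (T - {x})) (S, Q)"
  proof (rule remove.IH[OF \<open>x \<in> T\<close>])
    show "S \<inter> (T - {x}) = {}" "\<forall>y\<in>T - {x}. w y \<in> lists (S \<union> (T - {x}))"
      using remove.prems(1,2) x_unused by auto
    show "acyclic (derived_graph (T - {x}) (defining_rels w (T - {x})))"
      using remove.prems(3) by (rule acyclic_subset) (auto simp: derived_graph_defining_rels)
  qed
  ultimately have "(tietze ^^ Suc (card (T - {x}))) (S \<union> T, Q \<union> defining_rels w T) (S, Q)"
    by (rule relpowp_Suc_I2)
  then show ?case
    using card_Suc_Diff1[OF remove.hyps(1) \<open>x \<in> T\<close>] by simp
qed

lemma card_Un_image_le:
  assumes "finite A" "finite B" "A \<inter> B = {}"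
  shows "card (A \<union> f ` B) \<le> card (A \<union> B)"
proof -
  have "card (A \<union> f ` B) \<le> card A + card (f ` B)"
    by (rule card_Un_le)
  also have "\<dots> \<le> card A + card B"
    using card_image_le[OF assms(2)] by simp
  also have "\<dots> = card (A \<union> B)"
    using assms by (simp add: card_Un_disjoint)
  finally show ?thesis .
qed

lemma card_Diff_Diff_disjoint:
  assumes "finite R" "D \<subseteq> R" "D \<inter> L = {}"
  shows "card (R - D - L) = card R - card (R \<inter> L) - card D"
proof -
  have "R - D - L = (R - L) - D" "D \<subseteq> R - L"
    using assms(2,3) by auto
  then show ?thesis
    using assms(1) by (simp add: card_Diff_subset finite_subset card_Diff_subset_Int)
qed

lemma tietze_eliminate_defined_generators:
  assumes "S \<inter> T = {}" "finite T" "finite R" "wf_pres (S \<union> T) R" "defining_rels w T \<subseteq> R"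
    and "acyclic (derived_graph T (defining_rels w T))"
  defines "N \<equiv> R - defining_rels w T - lists S \<times> lists S"
  shows "\<exists>Q. Q \<subseteq> lists S \<times> lists S \<and> finite Q \<and> card Q \<le> card (R - defining_rels w T)
           \<and> (tietze ^^ (2 * card N + card T)) (S \<union> T, R) (S, Q)"
proof -
  let ?D = "defining_rels w T" and ?L = "lists S \<times> lists S"
  have w: "\<forall>x\<in>T. w x \<in> lists (S \<union> T)"
    using assms(4,5) by (auto simp: wf_pres_def)
  obtain f where f: "\<And>u. u \<in> lists (S \<union> T) \<Longrightarrow> f u \<in> lists S \<and> rsim ?D u (f u)"
    using rsim_defining_rels_word[OF assms(2,6) w] by metis
  define Q where "Q = R \<inter> ?L \<union> map_prod f f ` N"
  have "N \<subseteq> lists (S \<union> T) \<times> lists (S \<union> T)"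
    using assms(4) unfolding N_def wf_pres_def by blast
  then have "Q \<subseteq> ?L"
    using f unfolding Q_def by fastforce
  have "(tietze ^^ (2 * card N)) (S \<union> T, R) (S \<union> T, Q \<union> ?D)"
    using tietze_normalize_rels[of "S \<union> T" R S ?D f] assms(3-5) f
    unfolding N_def Q_def by (simp add: Un_ac)
  moreover have "(tietze ^^ card T) (S \<union> T, Q \<union> ?D) (S, Q)"
    using assms(1,2,6) w \<open>Q \<subseteq> ?L\<close> by (intro tietze_remove_generators)
  ultimately have "(tietze ^^ (2 * card N + card T)) (S \<union> T, R) (S, Q)"
    unfolding relpowp_add by auto
  moreover have "card Q \<le> card (R - ?D)"
  proof -
    have "card Q \<le> card (R \<inter> ?L \<union> N)"
      unfolding Q_def using assms(3) unfolding N_def by (intro card_Un_image_le) auto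
    moreover have "?D \<inter> ?L = {}"
      using assms(1) by auto
    then have "R \<inter> ?L \<union> N = R - ?D"
      unfolding N_def by blast
    ultimately show ?thesis by simp
  qed
  moreover have "finite Q"
    using assms(3) unfolding Q_def N_def by simp
  ultimately show ?thesis
    using \<open>Q \<subseteq> ?L\<close> by blast
qed

theorem theorem8:
  fixes \<Sigma> \<Sigma>' :: "'a set" and R D :: "'a rels"
  assumes "\<Sigma>' \<subseteq> \<Sigma>"
    and "finite (\<Sigma> - \<Sigma>')"
    and "R \<subseteq> lists \<Sigma> \<times> lists \<Sigma>"
    and "finite R"
    and "D \<subseteq> R"
    and "defining_family \<Sigma> (\<Sigma> - \<Sigma>') D"
    and "acyclic (derived_graph (\<Sigma> - \<Sigma>') D)"
  shows "\<exists>Q m. Q \<subseteq> lists \<Sigma>' \<times> lists \<Sigma>' \<and> finite Q \<and> card Q \<le> card (R - D)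
           \<and> tietze_seq m (\<Sigma>, R) (\<Sigma>', Q)
           \<and> (card R - card (R \<inter> (lists \<Sigma>' \<times> lists \<Sigma>')) - card D) + card (\<Sigma> - \<Sigma>') \<le> m
           \<and> m \<le> 2 * (card R - card (R \<inter> (lists \<Sigma>' \<times> lists \<Sigma>')) - card D) + card (\<Sigma> - \<Sigma>')"
proof -
  let ?P = "\<Sigma> - \<Sigma>'" and ?L = "lists \<Sigma>' \<times> lists \<Sigma>'"
  obtain w where D: "D = defining_rels w ?P"
    using assms(6) unfolding defining_family_def by blast
  have \<Sigma>: "\<Sigma> = \<Sigma>' \<union> ?P"
    using assms(1) by blast
  obtain Q where "Q \<subseteq> ?L" "finite Q" "card Q \<le> card (R - D)"
    and "(tietze ^^ (2 * card (R - D - ?L) + card ?P)) (\<Sigma>, R) (\<Sigma>', Q)"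
    using tietze_eliminate_defined_generators[of \<Sigma>' ?P R w] assms(2-5,7) \<Sigma> D
    unfolding wf_pres_def by auto
  moreover have "card (R - D - ?L) = card R - card (R \<inter> ?L) - card D"
    using assms(4,5) D by (intro card_Diff_Diff_disjoint) auto
  ultimately show ?thesis
    by (intro exI[of _ Q] exI[of _ "2 * card (R - D - ?L) + card ?P"])
      (simp add: tietze_seq_if_relpowp)
qed

end
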